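(* Let $Y$ and $W$ be nonempty finite posets and let $n\ge 2$. There is a bijection between \[ O_{\mu(Y,W),n}\ \sqcup\ \bigsqcup_{\substack{a+b=n-1\\ a,b\ge 1}} O_{Y,a}\times O_{W,b} \qquad\text{and}\qquad \bigsqcup_{\substack{c+d=n\\ c,d\ge 1}} O_{Y,c}\times O_{W,d}. \] In particular $\Omega(\mu(Y,W),n)+\sum_{a+b=n-1}\Omega(Y,a)\Omega(W,b)=\sum_{c+d=n}\Omega(Y,c)\Omega(W,d)$.
   Context: For $n\ge1$, $\langle n\rangle$ denotes the chain $1<2<\dots<n$. For a finite poset $X$, $O_{X,n}$ is the set of strict order preserving maps $f:X\to\langle n\rangle$ (i.e. $u<v$ in $X$ implies $f(u)<f(v)$), and $\Omega(X,n)=|O_{X,n}|$. For finite posets $Y,W$, the concatenation $\mu(Y,W)$ is the poset on the disjoint union of $Y$ and $W$, keeping the orders of $Y$ and $W$, and additionally declaring every element of $Y$ smaller than every element of $W$. *)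

theory Defs
  imports Main "HOL-Library.FuncSet"
begin

(* A finite poset is a carrier set X together with a (reflexive) partial order r on X
   (partial_order_on X r, so r \<subseteq> X \<times> X). *)

definition strict_lt :: "'a rel \<Rightarrow> 'a \<Rightarrow> 'a \<Rightarrow> bool" where
  "strict_lt r u v \<longleftrightarrow> (u, v) \<in> r \<and> u \<noteq> v"

definition OX :: "'a set \<Rightarrow> 'a rel \<Rightarrow> nat \<Rightarrow> ('a \<Rightarrow> nat) set" where
  "OX X r n = {f \<in> X \<rightarrow>\<^sub>E {1..n}. \<forall>u\<in>X. \<forall>v\<in>X. strict_lt r u v \<longrightarrow> f u < f v}"

definition Omega :: "'a set \<Rightarrow> 'a rel \<Rightarrow> nat \<Rightarrow> nat" where
  "Omega X r n = card (OX X r n)"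

(* concatenation \<mu>(Y,W): carrier is the disjoint union, every element of Y below every element of W *)
definition concat_carrier :: "'a set \<Rightarrow> 'b set \<Rightarrow> ('a + 'b) set" where
  "concat_carrier Y W = Inl ` Y \<union> Inr ` W"

definition concat_rel :: "'a set \<Rightarrow> 'a rel \<Rightarrow> 'b set \<Rightarrow> 'b rel \<Rightarrow> ('a + 'b) rel" where
  "concat_rel Y r W s =
     map_prod Inl Inl ` r \<union> map_prod Inr Inr ` s \<union> (Inl ` Y \<times> Inr ` W)"

end

theory Submission
  imports Defs
begin

(* A map f in O_{mu(Y,W),n} splits at c = max f(Y): its restriction to Y lies in O_{Y,c} and
   attains c, and f - c restricted to W lies in O_{W,n-c}; conversely such data glue back.
   The remaining triples (c, g, g'), where g misses the value c, are exactly those with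
   g in O_{Y,c-1}, i.e. the terms a = c - 1 of the second summand. Only the strict relations
   enter. *)

lemma strict_lt_concat_rel [simp]:
  "strict_lt (concat_rel Y r W s) (Inl u) (Inl v) \<longleftrightarrow> strict_lt r u v"
  "strict_lt (concat_rel Y r W s) (Inr w) (Inr x) \<longleftrightarrow> strict_lt s w x"
  "strict_lt (concat_rel Y r W s) (Inl u) (Inr w) \<longleftrightarrow> u \<in> Y \<and> w \<in> W"
  "\<not> strict_lt (concat_rel Y r W s) (Inr w) (Inl u)"
  by (auto simp: strict_lt_def concat_rel_def)

lemma mem_OX_iff:
  "f \<in> OX X r n \<longleftrightarrow> f \<in> extensional X \<and> (\<forall>x\<in>X. f x \<in> {1..n}) \<and>
     (\<forall>u\<in>X. \<forall>v\<in>X. strict_lt r u v \<longrightarrow> f u < f v)"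
  unfolding OX_def PiE_def Pi_def by auto

lemma mem_OX_concat_iff:
  "f \<in> OX (concat_carrier Y W) (concat_rel Y r W s) n \<longleftrightarrow>
    f \<in> extensional (concat_carrier Y W) \<and>
    (\<lambda>y\<in>Y. f (Inl y)) \<in> OX Y r n \<and> (\<lambda>w\<in>W. f (Inr w)) \<in> OX W s n \<and>
    (\<forall>y\<in>Y. \<forall>w\<in>W. f (Inl y) < f (Inr w))"
  unfolding mem_OX_iff concat_carrier_def by (auto simp: extensional_def)

lemma finite_OX: "finite X \<Longrightarrow> finite (OX X r n)"
  unfolding OX_def by (rule finite_subset[of _ "X \<rightarrow>\<^sub>E {1..n}"]) (auto intro: finite_PiE)

lemma OX_zero_empty: "X \<noteq> {} \<Longrightarrow> OX X r 0 = {}"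
  by (auto simp: mem_OX_iff)

lemma OX_Suc_not_attaining_iff:
  "g \<in> OX X r (Suc n) \<and> Suc n \<notin> g ` X \<longleftrightarrow> g \<in> OX X r n"
proof
  assume g: "g \<in> OX X r (Suc n) \<and> Suc n \<notin> g ` X"
  then have "g x \<le> n" if "x \<in> X" for x
    using that by (auto simp: mem_OX_iff image_iff) (metis le_SucE)
  with g show "g \<in> OX X r n" by (auto simp: mem_OX_iff)
qed (auto simp: mem_OX_iff)

lemma card_Sigma_OX_times:
  assumes "finite I" "finite Y" "finite W"
  shows "card (SIGMA i:I. OX Y r (a i) \<times> OX W s (b i)) = (\<Sum>i\<in>I. Omega Y r (a i) * Omega W s (b i))"
  using assms by (simp add: Omega_def card_cartesian_product finite_OX)

lemma bij_betw_case_sum_Plus: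
  assumes "bij_betw f A C" "bij_betw g B D" "C \<inter> D = {}"
  shows "bij_betw (case_sum f g) (A <+> B) (C \<union> D)"
  unfolding Plus_def
proof (rule bij_betw_combine)
  have "bij_betw Inl A (Inl ` A)" "bij_betw Inr B (Inr ` B)"
    by (simp_all add: inj_on_imp_bij_betw)
  with assms(1,2) show "bij_betw (case_sum f g) (Inl ` A) C" "bij_betw (case_sum f g) (Inr ` B) D"
    by (metis bij_betw_comp_iff case_sum_o_inj)+
qed (fact assms(3))

definition split_at_max ::
    "'a set \<Rightarrow> 'b set \<Rightarrow> ('a + 'b \<Rightarrow> nat) \<Rightarrow> nat \<times> ('a \<Rightarrow> nat) \<times> ('b \<Rightarrow> nat)" where
  "split_at_max Y W f =
     (let c = Max ((\<lambda>y. f (Inl y)) ` Y) in (c, \<lambda>y\<in>Y. f (Inl y), \<lambda>w\<in>W. f (Inr w) - c))"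

definition join_shifted ::
    "'a set \<Rightarrow> 'b set \<Rightarrow> nat \<times> ('a \<Rightarrow> nat) \<times> ('b \<Rightarrow> nat) \<Rightarrow> ('a + 'b \<Rightarrow> nat)" where
  "join_shifted Y W = (\<lambda>(c, g, g'). case_sum (\<lambda>y\<in>Y. g y) (\<lambda>w\<in>W. g' w + c))"

lemma OX_concat_Max:
  assumes f: "f \<in> OX (concat_carrier Y W) (concat_rel Y r W s) n" and "finite Y" "Y \<noteq> {}"
  defines "c \<equiv> Max ((\<lambda>y. f (Inl y)) ` Y)"
  shows "c \<in> (\<lambda>y. f (Inl y)) ` Y"
    and "\<And>y. y \<in> Y \<Longrightarrow> f (Inl y) \<le> c"
    and "\<And>w. w \<in> W \<Longrightarrow> c < f (Inr w)"
proof -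
  show c: "c \<in> (\<lambda>y. f (Inl y)) ` Y"
    unfolding c_def using assms(2,3) by simp
  show "\<And>y. y \<in> Y \<Longrightarrow> f (Inl y) \<le> c"
    unfolding c_def using assms(2) by simp
  fix w assume "w \<in> W"
  obtain y where "y \<in> Y" "c = f (Inl y)" using c by blast
  with f \<open>w \<in> W\<close> show "c < f (Inr w)" unfolding mem_OX_concat_iff by blast
qed

lemma split_at_max_in_Sigma:
  assumes f: "f \<in> OX (concat_carrier Y W) (concat_rel Y r W s) n"
    and "finite Y" "Y \<noteq> {}" "W \<noteq> {}"
  shows "split_at_max Y W f \<in> (SIGMA c:{1..n-1}. {g \<in> OX Y r c. c \<in> g ` Y} \<times> OX W s (n - c))"
proof -
  define c where "c = Max ((\<lambda>y. f (Inl y)) ` Y)"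
  note c = OX_concat_Max[OF assms(1-3), folded c_def]
  obtain w where w: "w \<in> W" using assms(4) by blast
  then have "f (Inr w) \<le> n" using f unfolding mem_OX_concat_iff by (auto simp: mem_OX_iff)
  then have "c < n" using c(3)[OF w] by linarith
  moreover have "1 \<le> c" using c(1) f unfolding mem_OX_concat_iff by (auto simp: mem_OX_iff)
  moreover have "(\<lambda>y\<in>Y. f (Inl y)) \<in> OX Y r c"
    using c(2) f unfolding mem_OX_concat_iff by (auto simp: mem_OX_iff)
  moreover have "c \<in> (\<lambda>y\<in>Y. f (Inl y)) ` Y" using c(1) by auto
  moreover have "(\<lambda>w\<in>W. f (Inr w) - c) \<in> OX W s (n - c)"
  proof -
    have fW: "(\<lambda>w\<in>W. f (Inr w)) \<in> OX W s n" using f by (simp add: mem_OX_concat_iff)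
    show ?thesis unfolding mem_OX_iff
    proof (intro conjI ballI impI)
      fix w assume w: "w \<in> W"
      then have "f (Inr w) \<le> n" "c < f (Inr w)" using fW c(3) by (auto simp: mem_OX_iff)
      then show "(\<lambda>w\<in>W. f (Inr w) - c) w \<in> {1..n - c}" using w by auto
    next
      fix u v assume uv: "u \<in> W" "v \<in> W" "strict_lt s u v"
      then have "f (Inr u) < f (Inr v)" "c < f (Inr u)" using fW c(3) by (auto simp: mem_OX_iff)
      then show "(\<lambda>w\<in>W. f (Inr w) - c) u < (\<lambda>w\<in>W. f (Inr w) - c) v" using uv by auto
    qed simp
  qed
  ultimately show ?thesis by (simp add: split_at_max_def c_def[symmetric] Let_def)
qed

lemma join_shifted_simps [simp]:
  "join_shifted Y W (c, g, g') (Inl y) = (if y \<in> Y then g y else undefined)"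
  "join_shifted Y W (c, g, g') (Inr w) = (if w \<in> W then g' w + c else undefined)"
  by (simp_all add: join_shifted_def)

lemma OX_mono: "a \<le> b \<Longrightarrow> OX X r a \<subseteq> OX X r b"
  by (simp add: subset_iff mem_OX_iff) (meson le_trans)

lemma join_shifted_in_OX:
  assumes g: "g \<in> OX Y r c" and g': "g' \<in> OX W s (n - c)" and "c \<le> n"
  shows "join_shifted Y W (c, g, g') \<in> OX (concat_carrier Y W) (concat_rel Y r W s) n"
  unfolding mem_OX_concat_iff
proof (intro conjI ballI)
  show "join_shifted Y W (c, g, g') \<in> extensional (concat_carrier Y W)"
    by (auto simp: extensional_def concat_carrier_def join_shifted_def split: sum.split)
  have "(\<lambda>y\<in>Y. join_shifted Y W (c, g, g') (Inl y)) = g"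
    using g by (auto simp: mem_OX_iff extensional_restrict cong: restrict_cong)
  then show "(\<lambda>y\<in>Y. join_shifted Y W (c, g, g') (Inl y)) \<in> OX Y r n"
    using g OX_mono[OF \<open>c \<le> n\<close>] by auto
  show "(\<lambda>w\<in>W. join_shifted Y W (c, g, g') (Inr w)) \<in> OX W s n"
    using g' \<open>c \<le> n\<close> by (auto simp: mem_OX_iff)
  fix y w assume "y \<in> Y" "w \<in> W"
  then show "join_shifted Y W (c, g, g') (Inl y) < join_shifted Y W (c, g, g') (Inr w)"
    using g g' by (fastforce simp: mem_OX_iff)
qed

lemma join_shifted_split_at_max:
  assumes f: "f \<in> OX (concat_carrier Y W) (concat_rel Y r W s) n" and "finite Y" "Y \<noteq> {}"
  shows "join_shifted Y W (split_at_max Y W f) = f"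
proof
  fix x
  have ext: "f \<in> extensional (concat_carrier Y W)" using f by (simp add: mem_OX_concat_iff)
  then have "f (Inl y) = undefined" if "y \<notin> Y" for y
    using that by (auto simp: concat_carrier_def intro: extensional_arb)
  moreover have "f (Inr w) = undefined" if "w \<notin> W" for w
    using ext that by (auto simp: concat_carrier_def intro: extensional_arb)
  ultimately show "join_shifted Y W (split_at_max Y W f) x = f x"
    using OX_concat_Max(3)[OF assms] by (cases x) (auto simp: split_at_max_def Let_def less_imp_le)
qed

lemma split_at_max_join_shifted:
  assumes g: "g \<in> OX Y r c" "c \<in> g ` Y" and g': "g' \<in> OX W s (n - c)" and "finite Y"
  shows "split_at_max Y W (join_shifted Y W (c, g, g')) = (c, g, g')"
proof -
  have "Max ((\<lambda>y. join_shifted Y W (c, g, g') (Inl y)) ` Y) = c"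
    using assms by (auto simp: mem_OX_iff intro!: Max_eqI)
  moreover have "(\<lambda>y\<in>Y. join_shifted Y W (c, g, g') (Inl y)) = g"
    using g by (auto simp: mem_OX_iff extensional_restrict cong: restrict_cong)
  moreover have "(\<lambda>w\<in>W. join_shifted Y W (c, g, g') (Inr w) - c) = g'"
    using g' by (auto simp: mem_OX_iff extensional_restrict cong: restrict_cong)
  ultimately show ?thesis by (simp add: split_at_max_def)
qed

lemma bij_betw_split_at_max:
  assumes "finite Y" "Y \<noteq> {}" "W \<noteq> {}"
  shows "bij_betw (split_at_max Y W) (OX (concat_carrier Y W) (concat_rel Y r W s) n)
           (SIGMA c:{1..n-1}. {g \<in> OX Y r c. c \<in> g ` Y} \<times> OX W s (n - c))"
proof (rule bij_betw_byWitness[where f' = "join_shifted Y W"])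
  show "\<forall>f\<in>OX (concat_carrier Y W) (concat_rel Y r W s) n.
          join_shifted Y W (split_at_max Y W f) = f"
    using assms(1,2) by (simp add: join_shifted_split_at_max)
  show "\<forall>x\<in>(SIGMA c:{1..n-1}. {g \<in> OX Y r c. c \<in> g ` Y} \<times> OX W s (n - c)).
          split_at_max Y W (join_shifted Y W x) = x"
    using assms(1) split_at_max_join_shifted by fast
  show "split_at_max Y W ` OX (concat_carrier Y W) (concat_rel Y r W s) n
          \<subseteq> (SIGMA c:{1..n-1}. {g \<in> OX Y r c. c \<in> g ` Y} \<times> OX W s (n - c))"
    using split_at_max_in_Sigma[OF _ assms] by blast
  show "join_shifted Y W ` (SIGMA c:{1..n-1}. {g \<in> OX Y r c. c \<in> g ` Y} \<times> OX W s (n - c))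
          \<subseteq> OX (concat_carrier Y W) (concat_rel Y r W s) n"
  proof
    fix f
    assume "f \<in> join_shifted Y W ` (SIGMA c:{1..n-1}. {g \<in> OX Y r c. c \<in> g ` Y} \<times> OX W s (n - c))"
    then obtain c g g' where "f = join_shifted Y W (c, g, g')" "c \<le> n"
        "g \<in> OX Y r c" "g' \<in> OX W s (n - c)"
      by auto
    then show "f \<in> OX (concat_carrier Y W) (concat_rel Y r W s) n"
      using join_shifted_in_OX by blast
  qed
qed

lemma bij_betw_Suc_Sigma_OX:
  assumes "Y \<noteq> {}"
  shows "bij_betw (\<lambda>(a, gs). (Suc a, gs)) (SIGMA a:{1..n-2}. OX Y r a \<times> OX W s (n - 1 - a))
           (SIGMA c:{1..n-1}. {g \<in> OX Y r c. c \<notin> g ` Y} \<times> OX W s (n - c))"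
proof (rule bij_betw_byWitness[where f' = "\<lambda>(c, gs). (c - 1, gs)"])
  show "(\<lambda>(a, gs). (Suc a, gs)) ` (SIGMA a:{1..n-2}. OX Y r a \<times> OX W s (n - 1 - a))
          \<subseteq> (SIGMA c:{1..n-1}. {g \<in> OX Y r c. c \<notin> g ` Y} \<times> OX W s (n - c))"
  proof (rule image_subsetI)
    fix x assume "x \<in> (SIGMA a:{1..n-2}. OX Y r a \<times> OX W s (n - 1 - a))"
    then obtain a g g' where x: "x = (a, g, g')" "a \<in> {1..n-2}" "g \<in> OX Y r a"
        "g' \<in> OX W s (n - 1 - a)"
      by blast
    then have "g \<in> OX Y r (Suc a) \<and> Suc a \<notin> g ` Y"
      using OX_Suc_not_attaining_iff by blast
    with x show "(\<lambda>(a, gs). (Suc a, gs)) x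
        \<in> (SIGMA c:{1..n-1}. {g \<in> OX Y r c. c \<notin> g ` Y} \<times> OX W s (n - c))"
      by auto
  qed
  show "(\<lambda>(c, gs). (c - 1, gs)) ` (SIGMA c:{1..n-1}. {g \<in> OX Y r c. c \<notin> g ` Y} \<times> OX W s (n - c))
          \<subseteq> (SIGMA a:{1..n-2}. OX Y r a \<times> OX W s (n - 1 - a))"
  proof (rule image_subsetI)
    fix x assume "x \<in> (SIGMA c:{1..n-1}. {g \<in> OX Y r c. c \<notin> g ` Y} \<times> OX W s (n - c))"
    then obtain c g g' where x: "x = (c, g, g')" "c \<in> {1..n-1}" "g \<in> OX Y r c" "c \<notin> g ` Y"
        "g' \<in> OX W s (n - c)"
      by blast
    then obtain a where a: "c = Suc a" by (cases c) auto
    have g: "g \<in> OX Y r a"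
      using OX_Suc_not_attaining_iff[THEN iffD1, OF conjI] x(3,4) unfolding a .
    moreover have "a \<noteq> 0"
      using g OX_zero_empty[OF assms, of r] by (cases a) auto
    ultimately show "(\<lambda>(c, gs). (c - 1, gs)) x
        \<in> (SIGMA a:{1..n-2}. OX Y r a \<times> OX W s (n - 1 - a))"
      using x a by auto
  qed
qed auto

theorem proposition2p1:
  fixes Y :: "'a set" and r :: "'a rel" and W :: "'b set" and s :: "'b rel" and n :: nat
  assumes "finite Y" "Y \<noteq> {}" "partial_order_on Y r"
      and "finite W" "W \<noteq> {}" "partial_order_on W s"
      and "n \<ge> 2"
  shows "(\<exists>h. bij_betw h
            (OX (concat_carrier Y W) (concat_rel Y r W s) n
               <+> (SIGMA a:{1..n-2}. OX Y r a \<times> OX W s (n - 1 - a)))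
            (SIGMA c:{1..n-1}. OX Y r c \<times> OX W s (n - c)))
       \<and> Omega (concat_carrier Y W) (concat_rel Y r W s) n
           + (\<Sum>a\<in>{1..n-2}. Omega Y r a * Omega W s (n - 1 - a))
         = (\<Sum>c\<in>{1..n-1}. Omega Y r c * Omega W s (n - c))"
proof -
  let ?C = "OX (concat_carrier Y W) (concat_rel Y r W s) n"
  let ?D = "SIGMA a:{1..n-2}. OX Y r a \<times> OX W s (n - 1 - a)"
  let ?B = "SIGMA c:{1..n-1}. OX Y r c \<times> OX W s (n - c)"
  let ?T = "SIGMA c:{1..n-1}. {g \<in> OX Y r c. c \<in> g ` Y} \<times> OX W s (n - c)"
  let ?R = "SIGMA c:{1..n-1}. {g \<in> OX Y r c. c \<notin> g ` Y} \<times> OX W s (n - c)"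
  have "bij_betw (case_sum (split_at_max Y W) (\<lambda>(a, gs). (Suc a, gs))) (?C <+> ?D) (?T \<union> ?R)"
    by (rule bij_betw_case_sum_Plus[OF bij_betw_split_at_max bij_betw_Suc_Sigma_OX])
      (use assms(1,2,5) in blast)+
  moreover have "?T \<union> ?R = ?B" by blast
  ultimately have bij:
      "bij_betw (case_sum (split_at_max Y W) (\<lambda>(a, gs). (Suc a, gs))) (?C <+> ?D) ?B"
    by simp
  have "finite ?C"
    using assms(1,4) by (simp add: finite_OX concat_carrier_def)
  moreover have "finite ?D"
    using assms(1,4) by (simp add: finite_OX)
  ultimately have "card ?C + card ?D = card ?B"
    using bij_betw_same_card[OF bij] by (simp add: card_Plus)
  with bij show ?thesis
    using assms(1,4) by (auto simp: card_Sigma_OX_times Omega_def)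
qed

end
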